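(* Let $B>1$, $p>0$, $f_p(x)=x^{2p}e^{-x^2}$, $n\in\mathbb{R}$. For $a>0$ with $2ap+n>-1$, as $j\to\infty$, $$\sum_{l\ge1}f_p^a\Big(\frac{l}{B^j}\Big)l^n=\frac{B^{(n+1)j}}{2a^{ap+\frac{n+1}{2}}}\Gamma\Big(ap+\frac{n+1}{2}\Big)+o\big(B^{(n+1)j}\big).$$ Moreover, for $a_1,a_2>0$ with $2(a_1+a_2)p+n>-1$ and fixed $\Delta j\in\mathbb{Z}$, as $j\to\infty$, $$\sum_{l\ge1}f_p^{a_1}\Big(\frac{l}{B^j}\Big)f_p^{a_2}\Big(\frac{l}{B^{j+\Delta j}}\Big)l^n=\frac{B^{(n+1)j}\,\tau_{p,a_1,a_2}(\Delta j)}{2(a_1+a_2)^{(a_1+a_2)p+\frac{n+1}{2}}}\Gamma\Big((a_1+a_2)p+\frac{n+1}{2}\Big)+o\big(B^{(n+1)j}\big),$$ where $$\tau_{p,a_1,a_2}(\Delta j)=\Big(\frac{a_1B^{\Delta j}+a_2B^{-\Delta j}}{a_1+a_2}\Big)^{-((a_1+a_2)p+\frac{n+1}{2})}B^{\Delta j((a_1-a_2)p+\frac{n+1}{2})}.$$ *)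

theory Defs
  imports "HOL-Analysis.Analysis" "HOL-Library.Landau_Symbols"
begin

text \<open>The function f_p(x) = x^(2p) e^(-x^2) (used only at x > 0).\<close>
definition fp :: "real \<Rightarrow> real \<Rightarrow> real" where
  "fp p x = x powr (2 * p) * exp (- (x\<^sup>2))"

definition tau :: "real \<Rightarrow> real \<Rightarrow> real \<Rightarrow> real \<Rightarrow> real \<Rightarrow> int \<Rightarrow> real" where
  "tau B n p a1 a2 dj =
     ((a1 * B powr (of_int dj) + a2 * B powr (- of_int dj)) / (a1 + a2))
       powr (- ((a1 + a2) * p + (n + 1) / 2))
     * B powr (of_int dj * ((a1 - a2) * p + (n + 1) / 2))"

end

theory Submission
  imports Defs
begin

text \<open>Put x = l / B^j. Each summand becomes B^(jn) times a constant times g(x) = x^s exp(-C x^2),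
  where s = 2(a1 + a2)p + n and C = a1 + a2 B^(-2 dj), so B^(-(n+1)j) times the sum is, up to that
  constant, the Riemann sum h (g(h) + g(2h) + ...) with mesh h = B^(-j). This Riemann sum is the integral
  over (0, \<infinity>) of the step function x \<mapsto> g(h \<lceil>x/h\<rceil>). For h \<le> 1 these step functions are
  dominated by a fixed integrable combination of x^s exp(-C x^2) and exp(-C x^2), and they converge
  pointwise to g as h \<rightarrow> 0. By dominated convergence the Riemann sums therefore tend to the integral
  of g, which the substitution t = C x^2 turns into \<Gamma>((s+1)/2) / (2 C^((s+1)/2)). The constant in
  front rearranges to \<tau>. The single-window case is a2 = 0, dj = 0.\<close>

section \<open>Riemann sums as integrals of step functions\<close>

definition grid_step :: "(real \<Rightarrow> real) \<Rightarrow> real \<Rightarrow> real \<Rightarrow> real" where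
  "grid_step g h x = g (h * of_int \<lceil>x / h\<rceil>)"

definition grid_step_upto :: "(real \<Rightarrow> real) \<Rightarrow> real \<Rightarrow> nat \<Rightarrow> real \<Rightarrow> real" where
  "grid_step_upto g h N x =
     (\<Sum>k<N. g (real (Suc k) * h) * indicator {real k * h<..real (Suc k) * h} x)"

lemma grid_point_bounds:
  fixes h x :: real
  assumes "h > 0"
  shows "x \<le> h * of_int \<lceil>x / h\<rceil>" "h * of_int \<lceil>x / h\<rceil> \<le> x + h"
proof -
  have "h * (x / h) \<le> h * of_int \<lceil>x / h\<rceil>" "h * of_int \<lceil>x / h\<rceil> \<le> h * (x / h + 1)"
    using assms by (intro mult_left_mono le_of_int_ceiling of_int_ceiling_le_add_one; simp)+
  then show "x \<le> h * of_int \<lceil>x / h\<rceil>" "h * of_int \<lceil>x / h\<rceil> \<le> x + h"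
    using assms by (simp_all add: distrib_left)
qed

lemma grid_step_nonneg:
  assumes "\<And>x. x > 0 \<Longrightarrow> 0 \<le> g x" "h > 0" "x > 0"
  shows "0 \<le> grid_step g h x"
  using assms grid_point_bounds(1)[of h x] unfolding grid_step_def by force

lemma grid_step_upto_eq:
  assumes "h > 0" "x > 0"
  shows "grid_step_upto g h N x = (if x \<le> real N * h then grid_step g h x else 0)"
proof -
  define m where "m = nat \<lceil>x / h\<rceil>"
  have "\<lceil>x / h\<rceil> \<ge> 1"
    using assms by simp
  then have m: "of_int \<lceil>x / h\<rceil> = real m" "m \<ge> 1"
    by (simp_all add: m_def le_nat_iff)
  have cell: "real k * h < x \<and> x \<le> real (Suc k) * h \<longleftrightarrow> k = m - 1" for k
  proof -
    have "real k * h < x \<and> x \<le> real (Suc k) * h \<longleftrightarrow>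
        of_int (int k + 1) - 1 < x / h \<and> x / h \<le> of_int (int k + 1)"
      using assms by (simp add: field_simps)
    also have "\<dots> \<longleftrightarrow> \<lceil>x / h\<rceil> = int k + 1"
      by (rule ceiling_eq_iff[symmetric])
    also have "\<dots> \<longleftrightarrow> k = m - 1"
      using m assms by (auto simp: m_def)
    finally show ?thesis .
  qed
  have inside: "x \<le> real N * h \<longleftrightarrow> m - 1 < N"
  proof -
    have "x \<le> real N * h \<longleftrightarrow> \<lceil>x / h\<rceil> \<le> int N"
      using assms by (simp add: ceiling_le_iff pos_divide_le_eq)
    then show ?thesis
      using m by (auto simp: m_def)
  qed
  have "g (real (Suc k) * h) * indicator {real k * h<..real (Suc k) * h} x =
      (if k = m - 1 then g (real m * h) else 0)" for k
    using cell[of k] m(2) by (auto simp: indicator_def)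
  then have "grid_step_upto g h N x = (\<Sum>k<N. if k = m - 1 then g (real m * h) else 0)"
    unfolding grid_step_upto_def by simp
  also have "\<dots> = (if x \<le> real N * h then grid_step g h x else 0)"
    using inside m(1) by (simp add: grid_step_def mult.commute)
  finally show ?thesis .
qed

lemma has_integral_indicator_Ioc:
  fixes a b :: real
  assumes "0 \<le> a" "a \<le> b"
  shows "(indicator {a<..b} has_integral (b - a)) {0<..}"
proof -
  have "((\<lambda>_. 1::real) has_integral (b - a)) {a..b}"
    using assms has_integral_const_real[of "1::real" a b] by simp
  moreover have "negligible {x \<in> {a..b} - {a<..b}. (1::real) \<noteq> 0}"
    and "negligible {x \<in> {a<..b} - {a..b}. (1::real) \<noteq> 0}"
    by (auto intro: negligible_subset[OF negligible_sing[of a]])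
  ultimately have "((\<lambda>_. 1::real) has_integral (b - a)) {a<..b}"
    using has_integral_spike_set_eq[of "{a..b}" "{a<..b}" "\<lambda>_. 1::real"] by blast
  moreover have "indicator {a<..b} = (\<lambda>x. if x \<in> {a<..b} then 1::real else 0)"
    by (auto simp: indicator_def)
  moreover have "{a<..b} \<subseteq> {0<..}"
    using assms by auto
  ultimately show ?thesis
    using has_integral_restrict[of "{a<..b}" "{0<..}" "\<lambda>_. 1::real"] by simp
qed

lemma has_integral_grid_step_upto:
  assumes "h > 0"
  shows "(grid_step_upto g h N has_integral h * (\<Sum>k<N. g (real (Suc k) * h))) {0<..}"
proof -
  have "(grid_step_upto g h N has_integral
      (\<Sum>k<N. g (real (Suc k) * h) * (real (Suc k) * h - real k * h))) {0<..}"
    unfolding grid_step_upto_def using assms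
    by (intro has_integral_sum has_integral_mult_right has_integral_indicator_Ioc) auto
  then show ?thesis
    by (simp add: sum_distrib_left algebra_simps)
qed

lemma grid_step_has_integral:
  fixes g D :: "real \<Rightarrow> real"
  assumes h: "h > 0" and nonneg: "\<And>x. x > 0 \<Longrightarrow> 0 \<le> g x"
    and D: "D integrable_on {0<..}" and dom: "\<And>x. x > 0 \<Longrightarrow> grid_step g h x \<le> D x"
  shows "summable (\<lambda>k. g (real (Suc k) * h))"
    "(grid_step g h has_integral h * (\<Sum>k. g (real (Suc k) * h))) {0<..}"
proof -
  note upto = has_integral_grid_step_upto[OF h, of g]
  have upto_le: "0 \<le> grid_step_upto g h N x \<and> grid_step_upto g h N x \<le> grid_step g h x"
    if "x \<in> {0<..}" for N x
    using that grid_step_upto_eq[OF h] grid_step_nonneg[OF nonneg h] by auto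
  have "grid_step g h integrable_on {0<..} \<and>
      (\<lambda>N. integral {0<..} (grid_step_upto g h N)) \<longlonglongrightarrow> integral {0<..} (grid_step g h)"
  proof (rule monotone_convergence_increasing)
    show "grid_step_upto g h N integrable_on {0<..}" for N
      using upto by blast
    show "grid_step_upto g h N x \<le> grid_step_upto g h (Suc N) x" if "x \<in> {0<..}" for N x
      using that h grid_step_upto_eq[OF h] upto_le by (auto simp: distrib_right)
    show "(\<lambda>N. grid_step_upto g h N x) \<longlonglongrightarrow> grid_step g h x" if "x \<in> {0<..}" for x
    proof (rule tendsto_eventually)
      obtain N0 where "x / h \<le> real N0"
        using real_arch_simple by blast
      then have "x \<le> real N0 * h"
        using h by (simp add: pos_divide_le_eq)
      then have "x \<le> real N * h" if "N \<ge> N0" for N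
        using h that by (intro order_trans[OF \<open>x \<le> real N0 * h\<close>] mult_right_mono) auto
      then show "\<forall>\<^sub>F N in sequentially. grid_step_upto g h N x = grid_step g h x"
        using \<open>x \<in> {0<..}\<close> grid_step_upto_eq[OF h] eventually_sequentially by force
    qed
    show "bounded (range (\<lambda>N. integral {0<..} (grid_step_upto g h N)))"
    proof (rule boundedI)
      fix y assume "y \<in> range (\<lambda>N. integral {0<..} (grid_step_upto g h N))"
      then obtain N where y: "y = integral {0<..} (grid_step_upto g h N)"
        by blast
      have "0 \<le> y" "y \<le> integral {0<..} D"
        unfolding y using upto upto_le dom D
        by (auto intro!: integral_nonneg integral_le order_trans[OF _ dom])
      then show "norm y \<le> integral {0<..} D"
        by simp
    qed
  qed
  then have int: "grid_step g h integrable_on {0<..}"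
    and lim: "(\<lambda>N. integral {0<..} (grid_step_upto g h N)) \<longlonglongrightarrow> integral {0<..} (grid_step g h)"
    by auto
  have "integral {0<..} (grid_step_upto g h N) = (\<Sum>k<N. h * g (real (Suc k) * h))" for N
    using integral_unique[OF upto] by (simp add: sum_distrib_left)
  then have "(\<lambda>k. h * g (real (Suc k) * h)) sums integral {0<..} (grid_step g h)"
    using lim by (simp add: sums_def)
  then show summable: "summable (\<lambda>k. g (real (Suc k) * h))"
    and "(grid_step g h has_integral h * (\<Sum>k. g (real (Suc k) * h))) {0<..}"
    using int h by (auto simp: sums_iff summable_cmult_iff suminf_mult)
qed

lemma grid_step_tendsto:
  assumes "isCont g x"
  shows "((\<lambda>h. grid_step g h x) \<longlongrightarrow> g x) (at_right 0)"
proof -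
  have "((\<lambda>h. h * of_int \<lceil>x / h\<rceil>) \<longlongrightarrow> x) (at_right 0)"
  proof (rule tendsto_sandwich[of "\<lambda>_. x" _ _ "\<lambda>h. x + h"])
    show "\<forall>\<^sub>F h in at_right 0. x \<le> h * of_int \<lceil>x / h\<rceil>"
      "\<forall>\<^sub>F h in at_right 0. h * of_int \<lceil>x / h\<rceil> \<le> x + h"
      using eventually_at_right_less[of 0] by (auto elim!: eventually_mono simp: grid_point_bounds)
    show "((\<lambda>h. x + h) \<longlongrightarrow> x) (at_right 0)"
      using tendsto_add[OF tendsto_const tendsto_ident_at, of x 0 "{0<..}"] by simp
  qed simp
  then show ?thesis
    unfolding grid_step_def using assms by (rule isCont_tendsto_compose[rotated])
qed

lemma grid_sum_tendsto_integral:
  fixes g D :: "real \<Rightarrow> real"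
  assumes nonneg: "\<And>x. x > 0 \<Longrightarrow> 0 \<le> g x" and cont: "\<And>x. x > 0 \<Longrightarrow> isCont g x"
    and D: "D integrable_on {0<..}"
    and dom: "\<And>h x. 0 < h \<Longrightarrow> h < 1 \<Longrightarrow> x > 0 \<Longrightarrow> grid_step g h x \<le> D x"
  shows "((\<lambda>h. h * (\<Sum>k. g (real (Suc k) * h))) \<longlongrightarrow> integral {0<..} g) (at_right 0)"
proof (rule tendsto_at_right_sequentially[OF zero_less_one])
  fix S :: "nat \<Rightarrow> real"
  assume S: "\<And>n. 0 < S n" "\<And>n. S n < 1" and "S \<longlonglongrightarrow> 0"
  then have S_at_right: "filterlim S (at_right 0) sequentially"
    by (auto intro: tendsto_imp_filterlim_at_right)
  have grid: "(grid_step g (S n) has_integral S n * (\<Sum>k. g (real (Suc k) * S n))) {0<..}" for n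
    using grid_step_has_integral(2)[OF S(1) nonneg D dom[OF S(1,2)]] by blast
  have "(\<lambda>n. integral {0<..} (grid_step g (S n))) \<longlonglongrightarrow> integral {0<..} g"
  proof (rule dominated_convergence(2)[OF _ D])
    show "grid_step g (S n) integrable_on {0<..}" for n
      using grid by blast
    show "norm (grid_step g (S n) x) \<le> D x" if "x \<in> {0<..}" for n x
      using that S grid_step_nonneg[OF nonneg S(1)] dom by simp
    show "(\<lambda>n. grid_step g (S n) x) \<longlonglongrightarrow> g x" if "x \<in> {0<..}" for x
      using filterlim_compose[OF grid_step_tendsto[OF cont] S_at_right] that by simp
  qed
  then show "(\<lambda>n. S n * (\<Sum>k. g (real (Suc k) * S n))) \<longlonglongrightarrow> integral {0<..} g"
    using integral_unique[OF grid] by simp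
qed

section \<open>The integrand x^s exp(-C x^2)\<close>

definition power_gauss :: "real \<Rightarrow> real \<Rightarrow> real \<Rightarrow> real" where
  "power_gauss s C x = x powr s * exp (- C * x\<^sup>2)"

lemma power_gauss_nonneg: "0 \<le> power_gauss s C x"
  by (simp add: power_gauss_def)

lemma isCont_power_gauss: "x \<noteq> 0 \<Longrightarrow> isCont (power_gauss s C) x"
  unfolding power_gauss_def by (auto intro!: continuous_intros)

lemma Gamma_has_integral_Ioi:
  fixes e :: real
  assumes "e > 0"
  shows "((\<lambda>t. t powr (e - 1) / exp t) has_integral Gamma e) {0<..}"
proof -
  have "((\<lambda>t. t powr (e - 1) / exp t) has_integral Gamma e) {0..}"
    using assms by (rule Gamma_integral_real)
  moreover have "negligible {t \<in> {0..} - {0<..}. t powr (e - 1) / exp t \<noteq> 0}"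
    and "negligible {t \<in> {0<..} - {0..}. t powr (e - 1) / exp t \<noteq> 0}"
    by (auto intro: negligible_subset[OF negligible_sing[of 0]])
  ultimately show ?thesis
    using has_integral_spike_set_eq[of "{0..}" "{0<..}" "\<lambda>t. t powr (e - 1) / exp t"] by blast
qed

lemma power_gauss_jacobian:
  assumes "C > 0" "x > 0"
  shows "\<bar>2 * C * x\<bar> * ((C * x\<^sup>2) powr ((s + 1) / 2 - 1) / exp (C * x\<^sup>2))
    = 2 * C powr ((s + 1) / 2) * power_gauss s C x"
proof -
  define e where "e = (s + 1) / 2"
  have "(C * x\<^sup>2) powr (e - 1) = C powr (e - 1) * (x powr 2) powr (e - 1)"
    using assms by (simp add: powr_mult powr_realpow)
  also have "(x powr 2) powr (e - 1) = x powr (2 * (e - 1))"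
    by (simp add: powr_powr)
  also have "2 * (e - 1) = s - 1"
    by (simp add: e_def field_simps)
  finally have "\<bar>2 * C * x\<bar> * ((C * x\<^sup>2) powr (e - 1) / exp (C * x\<^sup>2))
      = 2 * (C * C powr (e - 1)) * (x * x powr (s - 1)) / exp (C * x\<^sup>2)"
    using assms by (simp add: abs_mult mult_ac)
  also have "C * C powr (e - 1) = C powr e"
    using assms by (simp add: powr_diff)
  also have "x * x powr (s - 1) = x powr s"
    using assms by (simp add: powr_diff)
  finally have "\<bar>2 * C * x\<bar> * ((C * x\<^sup>2) powr (e - 1) / exp (C * x\<^sup>2))
      = 2 * C powr e * power_gauss s C x"
    by (simp add: power_gauss_def exp_minus divide_inverse)
  then show ?thesis
    by (simp only: e_def)
qed

lemma power_gauss_has_integral: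
  assumes "s > -1" "C > 0"
  shows "(power_gauss s C has_integral Gamma ((s + 1) / 2) / (2 * C powr ((s + 1) / 2))) {0<..}"
proof -
  define e where "e = (s + 1) / 2"
  define f where "f t = t powr (e - 1) / exp t" for t :: real
  define G where "G x = C * x\<^sup>2" for x :: real
  have f: "(f has_integral Gamma e) {0<..}"
    unfolding f_def using assms by (intro Gamma_has_integral_Ioi) (simp add: e_def)
  then have "f absolutely_integrable_on {0<..}"
    by (intro nonnegative_absolutely_integrable_1) (auto simp: f_def)
  moreover have "G ` {0<..} = {0<..}"
  proof
    show "G ` {0<..} \<subseteq> {0<..}"
      using assms by (auto simp: G_def)
    show "{0<..} \<subseteq> G ` {0<..}"
    proof
      fix y :: real assume "y \<in> {0<..}"
      then have "y = G (sqrt (y / C))" "sqrt (y / C) \<in> {0<..}"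
        using assms by (auto simp: G_def)
      then show "y \<in> G ` {0<..}" by blast
    qed
  qed
  moreover have "inj_on G {0<..}"
    using assms by (auto simp: inj_on_def G_def power2_eq_iff_nonneg)
  moreover have "(G has_field_derivative 2 * C * x) (at x within {0<..})" for x
    unfolding G_def by (auto intro!: derivative_eq_intros)
  ultimately have "(\<lambda>x. \<bar>2 * C * x\<bar> * f (G x)) absolutely_integrable_on {0<..}"
      "integral {0<..} (\<lambda>x. \<bar>2 * C * x\<bar> * f (G x)) = Gamma e"
    using has_absolute_integral_change_of_variables_1'[of "{0<..}" G "\<lambda>x. 2 * C * x" f "Gamma e"] f
    by (auto simp: integral_unique)
  then have "((\<lambda>x. \<bar>2 * C * x\<bar> * f (G x) / (2 * C powr e)) has_integral Gamma e / (2 * C powr e))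
      {0<..}"
    by (intro has_integral_divide) (auto simp: has_integral_integral absolutely_integrable_on_def)
  moreover have "power_gauss s C x = \<bar>2 * C * x\<bar> * f (G x) / (2 * C powr e)" if "x \<in> {0<..}" for x
  proof -
    have "\<bar>2 * C * x\<bar> * f (G x) = 2 * C powr e * power_gauss s C x"
      using power_gauss_jacobian[of C x s] that assms unfolding f_def G_def e_def by simp
    then show ?thesis
      using assms by simp
  qed
  ultimately have "(power_gauss s C has_integral Gamma e / (2 * C powr e)) {0<..}"
    by (subst has_integral_cong)
  then show ?thesis
    by (simp add: e_def)
qed

lemma power_gauss_le_shifted:
  assumes "C > 0" "0 < x" "x \<le> y" "y \<le> x + h"
  shows "power_gauss s C y
    \<le> (1 + 2 powr \<bar>s\<bar>) * power_gauss s C x + (2 * h) powr \<bar>s\<bar> * power_gauss 0 C x"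
proof -
  have "y powr s \<le> (1 + 2 powr \<bar>s\<bar>) * x powr s + (2 * h) powr \<bar>s\<bar>"
  proof (cases "s \<le> 0")
    case True
    then have "y powr s \<le> x powr s"
      using assms by (intro powr_mono2') auto
    then show ?thesis
      by (simp add: distrib_right add_increasing2 add_increasing)
  next
    case False
    then have "y powr s \<le> (x + h) powr s"
      using assms by (intro powr_mono2) auto
    also have "(x + h) powr s \<le> 2 powr s * x powr s + (2 * h) powr s"
    proof (cases "x \<le> h")
      case True
      then have "(x + h) powr s \<le> (2 * h) powr s"
        using assms False by (intro powr_mono2) auto
      then show ?thesis
        by (simp add: add_increasing)
    next
      case False
      then have "(x + h) powr s \<le> (2 * x) powr s"
        using assms \<open>\<not> s \<le> 0\<close> by (intro powr_mono2) auto
      then show ?thesis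
        using assms by (simp add: powr_mult add_increasing2)
    qed
    finally show ?thesis
      using False powr_ge_zero[of x s] by (simp add: distrib_right; linarith)
  qed
  moreover have "exp (- C * y\<^sup>2) \<le> exp (- C * x\<^sup>2)"
    using assms by (auto intro!: mult_left_mono power_mono)
  ultimately have "y powr s * exp (- C * y\<^sup>2)
      \<le> ((1 + 2 powr \<bar>s\<bar>) * x powr s + (2 * h) powr \<bar>s\<bar>) * exp (- C * x\<^sup>2)"
    by (intro mult_mono) auto
  then show ?thesis
    using assms by (simp add: power_gauss_def algebra_simps)
qed

lemma grid_step_power_gauss_le:
  assumes "C > 0" "0 < h" "h \<le> H" "x > 0"
  shows "grid_step (power_gauss s C) h x
    \<le> (1 + 2 powr \<bar>s\<bar>) * power_gauss s C x + (2 * H) powr \<bar>s\<bar> * power_gauss 0 C x"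
proof -
  have "grid_step (power_gauss s C) h x
      \<le> (1 + 2 powr \<bar>s\<bar>) * power_gauss s C x + (2 * h) powr \<bar>s\<bar> * power_gauss 0 C x"
    unfolding grid_step_def using assms grid_point_bounds[of h x]
    by (intro power_gauss_le_shifted) auto
  also have "(2 * h) powr \<bar>s\<bar> \<le> (2 * H) powr \<bar>s\<bar>"
    using assms by (intro powr_mono2) auto
  then have "(2 * h) powr \<bar>s\<bar> * power_gauss 0 C x \<le> (2 * H) powr \<bar>s\<bar> * power_gauss 0 C x"
    by (intro mult_right_mono power_gauss_nonneg)
  finally show ?thesis
    by simp
qed

lemma integrable_power_gauss_combination:
  assumes "s > -1" "C > 0"
  shows "(\<lambda>x. a * power_gauss s C x + b * power_gauss 0 C x) integrable_on {0<..}"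
  using power_gauss_has_integral[OF assms] power_gauss_has_integral[of 0 C] assms
  by (intro integrable_add integrable_on_mult_right) (auto dest: has_integral_integrable)

lemma summable_power_gauss_grid:
  assumes "s > -1" "C > 0" "h > 0"
  shows "summable (\<lambda>k. power_gauss s C (real (Suc k) * h))"
  using grid_step_power_gauss_le[OF assms(2,3) order_refl]
  by (intro grid_step_has_integral(1)[OF assms(3) _ integrable_power_gauss_combination[OF assms(1,2)]])
    (auto simp: power_gauss_nonneg)

lemma power_gauss_grid_sum_tendsto:
  assumes "s > -1" "C > 0"
  shows "((\<lambda>h. h * (\<Sum>k. power_gauss s C (real (Suc k) * h)))
    \<longlongrightarrow> Gamma ((s + 1) / 2) / (2 * C powr ((s + 1) / 2))) (at_right 0)"
proof -
  have "((\<lambda>h. h * (\<Sum>k. power_gauss s C (real (Suc k) * h)))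
      \<longlongrightarrow> integral {0<..} (power_gauss s C)) (at_right 0)"
    using grid_step_power_gauss_le[OF assms(2) _ _ , of _ 1]
    by (intro grid_sum_tendsto_integral[OF _ _
          integrable_power_gauss_combination[OF assms, of "1 + 2 powr \<bar>s\<bar>" "2 powr \<bar>s\<bar>"]])
      (auto simp: power_gauss_nonneg isCont_power_gauss)
  then show ?thesis
    using integral_unique[OF power_gauss_has_integral[OF assms]] by simp
qed

lemma power_gauss_lattice_sum:
  fixes B n s C :: real
  assumes "B > 1" "s > -1" "C > 0"
  shows "(\<lambda>j::nat. (B powr real j) powr n * (\<Sum>k. power_gauss s C (real (Suc k) / B powr real j))
      - B powr ((n + 1) * real j) * (Gamma ((s + 1) / 2) / (2 * C powr ((s + 1) / 2))))
    \<in> o[at_top](\<lambda>j. B powr ((n + 1) * real j))"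
proof -
  define L where "L = Gamma ((s + 1) / 2) / (2 * C powr ((s + 1) / 2))"
  define h where "h j = inverse (B powr real j)" for j :: nat
  have "h = (\<lambda>j. inverse (B ^ j))"
    using assms(1) by (simp add: h_def powr_realpow fun_eq_iff)
  then have "h \<longlonglongrightarrow> 0"
    using LIMSEQ_inverse_realpow_zero[OF assms(1)] by simp
  moreover have "h j > 0" for j
    using assms(1) by (simp add: h_def)
  ultimately have "filterlim h (at_right 0) sequentially"
    by (auto intro: tendsto_imp_filterlim_at_right)
  then have "(\<lambda>j. h j * (\<Sum>k. power_gauss s C (real (Suc k) * h j))) \<longlonglongrightarrow> L"
    using filterlim_compose[OF power_gauss_grid_sum_tendsto[OF assms(2,3)]] by (simp add: L_def)
  then have lim: "(\<lambda>j. h j * (\<Sum>k. power_gauss s C (real (Suc k) * h j)) - L) \<longlonglongrightarrow> 0"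
    by (rule LIM_zero)
  have quotient: "((B powr real j) powr n * (\<Sum>k. power_gauss s C (real (Suc k) / B powr real j))
      - B powr ((n + 1) * real j) * L) / B powr ((n + 1) * real j)
      = h j * (\<Sum>k. power_gauss s C (real (Suc k) * h j)) - L" for j
  proof -
    define S where "S = (\<Sum>k. power_gauss s C (real (Suc k) * h j))"
    have "(\<Sum>k. power_gauss s C (real (Suc k) / B powr real j)) = S"
      by (simp add: S_def h_def divide_inverse)
    moreover have "(B powr real j) powr n = B powr (n * real j)"
      by (simp add: powr_powr mult.commute)
    moreover have "B powr ((n + 1) * real j) = B powr (n * real j) * B powr real j"
      by (simp add: powr_add[symmetric] algebra_simps)
    moreover have "B powr (n * real j) > 0" "B powr real j > 0"
      using assms(1) by simp_all
    ultimately show ?thesis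
      unfolding S_def[symmetric] h_def by (simp add: field_simps)
  qed
  have "(\<lambda>j. ((B powr real j) powr n * (\<Sum>k. power_gauss s C (real (Suc k) / B powr real j))
      - B powr ((n + 1) * real j) * L) / B powr ((n + 1) * real j)) \<longlonglongrightarrow> 0"
    unfolding quotient by (rule lim)
  then show ?thesis
    unfolding L_def[symmetric] by (rule smalloI_tendsto) (use assms(1) in simp)
qed

section \<open>The lattice sums\<close>

lemma fp_powr:
  assumes "x > 0"
  shows "fp p x powr a = x powr (2 * a * p) * exp (- a * x\<^sup>2)"
proof -
  have "fp p x powr a = (x powr (2 * p)) powr a * exp (- (x\<^sup>2)) powr a"
    unfolding fp_def using assms by (simp add: powr_mult)
  also have "\<dots> = x powr (2 * a * p) * exp (- a * x\<^sup>2)"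
    by (simp add: powr_powr exp_powr_real algebra_simps)
  finally show ?thesis .
qed

lemma fp_powr_product:
  assumes "x > 0" "b > 0" "c > 0"
  shows "fp p x powr a1 * fp p (x * c) powr a2 * (x * b) powr n =
    c powr (2 * a2 * p) * b powr n * power_gauss (2 * (a1 + a2) * p + n) (a1 + a2 * c\<^sup>2) x"
proof -
  have "fp p x powr a1 * fp p (x * c) powr a2 * (x * b) powr n =
      c powr (2 * a2 * p) * b powr n * (x powr (2 * a1 * p) * x powr (2 * a2 * p) * x powr n)
        * (exp (- a1 * x\<^sup>2) * exp (- a2 * (x * c)\<^sup>2))"
    using assms by (simp add: fp_powr powr_mult)
  also have "x powr (2 * a1 * p) * x powr (2 * a2 * p) * x powr n = x powr (2 * (a1 + a2) * p + n)"
    by (simp add: powr_add[symmetric] algebra_simps)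
  also have "exp (- a1 * x\<^sup>2) * exp (- a2 * (x * c)\<^sup>2) = exp (- (a1 + a2 * c\<^sup>2) * x\<^sup>2)"
    by (simp add: exp_add[symmetric] algebra_simps power_mult_distrib)
  finally show ?thesis
    by (simp add: power_gauss_def)
qed

lemma fp_lattice_summand_eq:
  fixes B p n a1 a2 :: real and dj :: int
  assumes "B > 0"
  shows "fp p (real (Suc k) / B powr real j) powr a1
        * fp p (real (Suc k) / B powr (real j + of_int dj)) powr a2 * real (Suc k) powr n
      = (B powr - of_int dj) powr (2 * a2 * p) * ((B powr real j) powr n
        * power_gauss (2 * (a1 + a2) * p + n) (a1 + a2 * (B powr - of_int dj)\<^sup>2)
            (real (Suc k) / B powr real j))"
proof -
  define x where "x = real (Suc k) / B powr real j"
  have "x > 0" "B powr real j > 0" "B powr - of_int dj > 0"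
    using assms by (simp_all add: x_def)
  moreover have "real (Suc k) / B powr (real j + of_int dj) = x * B powr - of_int dj"
    "real (Suc k) = x * B powr real j"
    using assms by (simp_all add: x_def powr_add powr_minus divide_inverse)
  ultimately show ?thesis
    using fp_powr_product[of x "B powr real j" "B powr - of_int dj" p a1 a2 n]
    by (simp add: x_def[symmetric])
qed

lemma tau_divide_eq:
  fixes B n p a1 a2 :: real and dj :: int
  assumes "B > 0" "a1 > 0" "a2 \<ge> 0"
  defines "A \<equiv> (a1 + a2) * p + (n + 1) / 2"
  shows "tau B n p a1 a2 dj / (a1 + a2) powr A =
    (B powr - of_int dj) powr (2 * a2 * p) / (a1 + a2 * (B powr - of_int dj)\<^sup>2) powr A"
proof -
  define u where "u = B powr of_int dj"
  define v where "v = B powr - of_int dj"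
  define Q where "Q = a1 * u + a2 * v"
  define E where "E = (a1 - a2) * p + (n + 1) / 2"
  have "u > 0" "v > 0" "u * v = 1"
    using assms(1) by (simp_all add: u_def v_def powr_add[symmetric])
  then have "Q > 0" "a1 + a2 > 0"
    using assms(2,3) by (simp_all add: Q_def add_pos_nonneg)
  have "a1 + a2 * v\<^sup>2 = v * Q"
    using \<open>u * v = 1\<close> by (simp add: Q_def algebra_simps power2_eq_square)
  then have "(a1 + a2 * v\<^sup>2) powr A = v powr A * Q powr A"
    using \<open>v > 0\<close> \<open>Q > 0\<close> by (simp add: powr_mult)
  moreover have "v powr (2 * a2 * p) = B powr (of_int dj * E) * v powr A"
  proof -
    have "B powr (of_int dj * E) * v powr A = B powr (of_int dj * E) * B powr (- of_int dj * A)"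
      by (simp add: v_def powr_powr)
    also have "\<dots> = B powr (of_int dj * E + - of_int dj * A)"
      by (simp only: powr_add)
    also have "of_int dj * E + - of_int dj * A = - of_int dj * (2 * a2 * p)"
      by (simp add: E_def A_def field_simps)
    finally show ?thesis
      by (simp add: v_def powr_powr)
  qed
  moreover have "tau B n p a1 a2 dj / (a1 + a2) powr A = B powr (of_int dj * E) / Q powr A"
  proof -
    have "tau B n p a1 a2 dj = (Q / (a1 + a2)) powr (- A) * B powr (of_int dj * E)"
      by (simp add: tau_def Q_def u_def v_def A_def E_def)
    moreover have "(Q / (a1 + a2)) powr (- A) = (a1 + a2) powr A / Q powr A"
      using \<open>Q > 0\<close> \<open>a1 + a2 > 0\<close> by (simp add: powr_minus powr_divide)
    ultimately show ?thesis
      using \<open>a1 + a2 > 0\<close> by simp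
  qed
  ultimately show ?thesis
    using \<open>v > 0\<close> \<open>Q > 0\<close> by (simp add: v_def[symmetric])
qed

lemma fp_lattice_sum_asymp:
  fixes B p n a1 a2 :: real and dj :: int
  assumes "B > 1" "a1 > 0" "a2 \<ge> 0" "2 * (a1 + a2) * p + n > -1"
  shows "(\<forall>j::nat. summable (\<lambda>k::nat. fp p (real (Suc k) / B powr real j) powr a1
            * fp p (real (Suc k) / B powr (real j + of_int dj)) powr a2
            * real (Suc k) powr n))
    \<and> (\<lambda>j::nat. (\<Sum>k. fp p (real (Suc k) / B powr real j) powr a1
            * fp p (real (Suc k) / B powr (real j + of_int dj)) powr a2
            * real (Suc k) powr n)
          - B powr ((n + 1) * real j) * tau B n p a1 a2 dj
            / (2 * (a1 + a2) powr ((a1 + a2) * p + (n + 1) / 2))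
            * Gamma ((a1 + a2) * p + (n + 1) / 2))
      \<in> o[at_top](\<lambda>j. B powr ((n + 1) * real j))"
proof -
  define c where "c = B powr - of_int dj"
  define C where "C = a1 + a2 * c\<^sup>2"
  define M where "M = c powr (2 * a2 * p)"
  define s where "s = 2 * (a1 + a2) * p + n"
  have "C > 0" "s > -1"
    using assms by (simp_all add: C_def s_def add_pos_nonneg)
  have summand: "fp p (real (Suc k) / B powr real j) powr a1
        * fp p (real (Suc k) / B powr (real j + of_int dj)) powr a2 * real (Suc k) powr n
      = M * ((B powr real j) powr n * power_gauss s C (real (Suc k) / B powr real j))" for j k
    unfolding M_def C_def c_def s_def using assms(1) by (intro fp_lattice_summand_eq) simp
  have summable: "summable (\<lambda>k. power_gauss s C (real (Suc k) / B powr real j))" for j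
    using summable_power_gauss_grid[OF \<open>s > -1\<close> \<open>C > 0\<close>, of "inverse (B powr real j)"] assms(1)
    by (simp add: divide_inverse)
  have main_term: "B powr ((n + 1) * real j) * tau B n p a1 a2 dj
        / (2 * (a1 + a2) powr ((a1 + a2) * p + (n + 1) / 2)) * Gamma ((a1 + a2) * p + (n + 1) / 2)
      = M * (B powr ((n + 1) * real j) * (Gamma ((s + 1) / 2) / (2 * C powr ((s + 1) / 2))))" for j
  proof -
    define A where "A = (a1 + a2) * p + (n + 1) / 2"
    have "(s + 1) / 2 = A"
      by (simp add: s_def A_def field_simps)
    moreover have "tau B n p a1 a2 dj / (a1 + a2) powr A = M / C powr A"
      using tau_divide_eq[of B a1 a2 n p dj] assms by (simp add: A_def M_def C_def c_def)
    moreover have "B powr ((n + 1) * real j) * tau B n p a1 a2 dj / (2 * (a1 + a2) powr A) * Gamma A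
        = B powr ((n + 1) * real j) * (tau B n p a1 a2 dj / (a1 + a2) powr A) * Gamma A / 2"
      by simp
    ultimately show ?thesis
      unfolding A_def[symmetric] by (simp add: mult_ac)
  qed
  have sum_eq: "(\<Sum>k. fp p (real (Suc k) / B powr real j) powr a1
        * fp p (real (Suc k) / B powr (real j + of_int dj)) powr a2 * real (Suc k) powr n)
      = M * ((B powr real j) powr n * (\<Sum>k. power_gauss s C (real (Suc k) / B powr real j)))" for j
    unfolding summand using suminf_mult[OF summable_mult[OF summable]] suminf_mult[OF summable]
    by simp
  show ?thesis
    unfolding sum_eq main_term right_diff_distrib[symmetric] unfolding summand
    using power_gauss_lattice_sum[OF assms(1) \<open>s > -1\<close> \<open>C > 0\<close>, of n] summable
    by (simp add: summable_mult)
qed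

lemma fp_lattice_sum_asymp_single:
  fixes B p n a :: real
  assumes "B > 1" "a > 0" "2 * a * p + n > -1"
  shows "(\<forall>j::nat. summable (\<lambda>k::nat. fp p (real (Suc k) / B powr real j) powr a
            * real (Suc k) powr n))
    \<and> (\<lambda>j::nat. (\<Sum>k. fp p (real (Suc k) / B powr real j) powr a * real (Suc k) powr n)
          - B powr ((n + 1) * real j) / (2 * a powr (a * p + (n + 1) / 2))
            * Gamma (a * p + (n + 1) / 2))
      \<in> o[at_top](\<lambda>j. B powr ((n + 1) * real j))"
proof -
  have zero_weight: "fp p (real (Suc k) / B powr (real j + of_int 0)) powr 0 = 1" for j k
    using assms(1) fp_powr[of "real (Suc k) / B powr real j" p 0] by simp
  have "tau B n p a 0 0 = 1"
    using assms(1,2) by (simp add: tau_def)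
  then show ?thesis
    using fp_lattice_sum_asymp[OF assms(1,2) order_refl, of p n 0, unfolded zero_weight] assms(3)
    by simp
qed

theorem lemma19:
  fixes B p n :: real
  assumes "B > 1" and "p > 0"
  shows "(\<forall>a::real. a > 0 \<longrightarrow> 2 * a * p + n > -1 \<longrightarrow>
            (\<forall>j::nat. summable (\<lambda>k::nat. fp p (real (Suc k) / B powr real j) powr a
                                         * real (Suc k) powr n))
          \<and> (\<lambda>j::nat. (\<Sum>k. fp p (real (Suc k) / B powr real j) powr a * real (Suc k) powr n)
                 - B powr ((n + 1) * real j) / (2 * a powr (a * p + (n + 1) / 2))
                   * Gamma (a * p + (n + 1) / 2))
             \<in> o[at_top](\<lambda>j. B powr ((n + 1) * real j)))
      \<and> (\<forall>a1 a2::real. \<forall>dj::int. a1 > 0 \<longrightarrow> a2 > 0 \<longrightarrow> 2 * (a1 + a2) * p + n > -1 \<longrightarrow>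
            (\<forall>j::nat. summable (\<lambda>k::nat. fp p (real (Suc k) / B powr real j) powr a1
                   * fp p (real (Suc k) / B powr (real j + of_int dj)) powr a2
                   * real (Suc k) powr n))
          \<and> (\<lambda>j::nat. (\<Sum>k. fp p (real (Suc k) / B powr real j) powr a1
                   * fp p (real (Suc k) / B powr (real j + of_int dj)) powr a2
                   * real (Suc k) powr n)
                 - B powr ((n + 1) * real j) * tau B n p a1 a2 dj
                   / (2 * (a1 + a2) powr ((a1 + a2) * p + (n + 1) / 2))
                   * Gamma ((a1 + a2) * p + (n + 1) / 2))
             \<in> o[at_top](\<lambda>j. B powr ((n + 1) * real j)))"
  by (intro fp_lattice_sum_asymp_single[OF assms(1)] fp_lattice_sum_asymp[OF assms(1)]
      conjI allI impI) auto

end
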